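(* In the setting below, let $\alpha$ be a limit ordinal, let $\emptyset\neq x\subseteq M_\alpha$, let $I=\{\beta<\alpha: x\cap M_{\beta+1}\neq\emptyset\}$, and for $\beta\in I$ let $x_{\beta+1}=x\cap M_{\beta+1}$. Then $x\in M_{\alpha+1}$ if and only if $I\neq\emptyset$, $x=\bigcup_{\beta\in I}x_{\beta+1}$, and $x_{\beta+1}\in M_{\beta+2}$ for every $\beta\in I$.
   Context: Work in ZFA (ZF with a set $A$ of atoms, i.e. urelements that have no elements), extended by a primitive binary relation $\preccurlyeq$ on $A$, with Separation and Replacement holding for formulas mentioning $\preccurlyeq$. $A$ is an infinite set of atoms and $\preccurlyeq$ is a pre-ordering (reflexive, transitive) on $A$ with no minimal elements: for every $a\in A$ there is $b\in A$ with $b\preccurlyeq a$ and not $a\preccurlyeq b$. For $a\in A$, $pr(a)=\{b\in A:b\preccurlyeq a\}$; $LO(A,\preccurlyeq)$ is the set of nonempty $x\subseteq A$ with $pr(a)\subseteq x$ for all $a\in x$. For a set $X$ of sets, $LO(X,\subseteq)$ is the set of nonempty $x\subseteq X$ such that for every $y\in x$ and every $z\in X$ with $z\subseteq y$, $z\in x$. The magmatic hierarchy: $M_1=LO(A,\preccurlyeq)$; $M_{\alpha+1}=LO(M_\alpha,\subseteq)$ for $\alpha\geq1$; $M_\alpha=\bigcup_{1\leq\beta<\alpha}M_\beta$ for limit $\alpha$; $M=\bigcup_{\alpha\geq1}M_\alpha$. (Here $M_{0+1}=M_1$.) Limit ordinals are nonzero. *)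

theory Defs
  imports Main
begin

text \<open>Objects of the universe are elements of a type 'v.
  A :: 'v set is the set of atoms, elts u is the set of elements of u
  (atoms have no elements, non-atoms are determined by their elements).
  A set of objects S is "realised" by a non-atom u when elts u = S.\<close>

definition ozero :: "'o::wellorder" where
  "ozero = (LEAST x. True)"

definition osucc :: "'o::wellorder \<Rightarrow> 'o" where
  "osucc b = (LEAST c. b < c)"

definition is_limit :: "'o::wellorder \<Rightarrow> bool" where
  "is_limit a \<longleftrightarrow> a \<noteq> ozero \<and> (\<forall>b<a. osucc b < a)"

definition pr :: "('v \<Rightarrow> 'v \<Rightarrow> bool) \<Rightarrow> 'v set \<Rightarrow> 'v \<Rightarrow> 'v set" where
  "pr le A a = {b \<in> A. le b a}"

definition LO_pre :: "('v \<Rightarrow> 'v \<Rightarrow> bool) \<Rightarrow> 'v set \<Rightarrow> 'v set set" where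
  "LO_pre le A = {x. x \<noteq> {} \<and> x \<subseteq> A \<and> (\<forall>a\<in>x. pr le A a \<subseteq> x)}"

definition LO_sub :: "('v \<Rightarrow> 'v set) \<Rightarrow> 'v set \<Rightarrow> 'v set set" where
  "LO_sub elts X = {x. x \<noteq> {} \<and> x \<subseteq> X \<and> (\<forall>y\<in>x. \<forall>z\<in>X. elts z \<subseteq> elts y \<longrightarrow> z \<in> x)}"

definition objs :: "'v set \<Rightarrow> ('v \<Rightarrow> 'v set) \<Rightarrow> 'v set set \<Rightarrow> 'v set" where
  "objs A elts F = {u. u \<notin> A \<and> elts u \<in> F}"

text \<open>One step of the magmatic hierarchy recursion; index ozero is a dummy (M_0 is not used).\<close>
definition M_step :: "('v \<Rightarrow> 'v \<Rightarrow> bool) \<Rightarrow> 'v set \<Rightarrow> ('v \<Rightarrow> 'v set)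
    \<Rightarrow> ('o::wellorder \<Rightarrow> 'v set) \<Rightarrow> 'o \<Rightarrow> 'v set" where
  "M_step le A elts f g =
     (if g = ozero then {}
      else if g = osucc ozero then objs A elts (LO_pre le A)
      else if (\<exists>b<g. g = osucc b) then objs A elts (LO_sub elts (f (THE b. b < g \<and> g = osucc b)))
      else (\<Union>b\<in>{b. osucc ozero \<le> b \<and> b < g}. f b))"

definition Mag :: "('v \<Rightarrow> 'v \<Rightarrow> bool) \<Rightarrow> 'v set \<Rightarrow> ('v \<Rightarrow> 'v set) \<Rightarrow> 'o::wellorder \<Rightarrow> 'v set" where
  "Mag le A elts = wfrec {(x, y). x < y} (M_step le A elts)"

end

theory Submission
  imports Defs
begin

text \<open>
  Every member of a limit stage M(\<alpha>) is born at some successor stage M(\<beta>+1)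
  with \<beta> < \<alpha>. The crux is that successor stages are closed downwards inside the hierarchy:
  if v \<subseteq> u with u \<in> M(\<beta>+1) and v \<in> M(\<gamma>+1), then v \<in> M(\<beta>+1).
  This goes by induction on max(\<beta>, \<gamma>); members of M(1) are sets of atoms while members of
  later successor stages contain no atoms, so u and v are born at stages of the same kind.
  Consequently x \<subseteq> M(\<alpha>) is a lower set of (M(\<alpha>), \<subseteq>) exactly when every nonempty slice
  x \<inter> M(\<beta>+1) is a lower set of M(\<beta>+1), i.e. (once realised by Separation) a member
  of M(\<beta>+2).
\<close>

lemma ozero_least: "ozero \<le> (b::'o::wellorder)"
  unfolding ozero_def by (rule Least_le) simp

text \<open>At a greatest element b, osucc b is the LEAST of an empty set, an unspecified value;
  hence the hypothesis b < c on every lemma about osucc b.\<close>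

lemma osucc_greater: "(b::'o::wellorder) < c \<Longrightarrow> b < osucc b"
  unfolding osucc_def by (rule LeastI)

lemma osucc_least: "(b::'o::wellorder) < c \<Longrightarrow> osucc b \<le> c"
  unfolding osucc_def by (rule Least_le)

lemma osucc_neq_ozero: "(b::'o::wellorder) < c \<Longrightarrow> osucc b \<noteq> ozero"
  using osucc_greater[of b c] ozero_least[of b] by auto

lemma osucc_inject:
  fixes b c :: "'o::wellorder"
  assumes "b < osucc b" "c < osucc c" "osucc b = osucc c"
  shows "b = c"
  using assms osucc_least[of b c] osucc_least[of c b] by (metis leD linorder_cases)

lemma the_osucc_pred:
  "(b::'o::wellorder) < osucc b \<Longrightarrow> (THE b'. b' < osucc b \<and> osucc b = osucc b') = b"
  by (rule the_equality) (auto intro: osucc_inject)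

lemma M_step_cong:
  assumes "\<And>b. b < g \<Longrightarrow> f b = f' b"
  shows "M_step le A elts f g = M_step le A elts f' g"
  unfolding M_step_def
proof (intro if_cong refl)
  assume "\<exists>b<g. g = osucc b"
  then obtain b where "b < osucc b" "g = osucc b" by blast
  then show "objs A elts (LO_sub elts (f (THE b. b < g \<and> g = osucc b)))
      = objs A elts (LO_sub elts (f' (THE b. b < g \<and> g = osucc b)))"
    using assms by (simp add: the_osucc_pred)
qed (use assms in \<open>auto intro!: SUP_cong\<close>)

lemma Mag_unfold: "Mag le A elts = M_step le A elts (Mag le A elts)"
  unfolding Mag_def
proof (rule wfrec_fixpoint[OF wf])
  show "adm_wf {(x, y). x < y} (M_step le A elts)"
    unfolding adm_wf_def by (intro allI impI M_step_cong) auto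
qed

lemma Mag_ozero: "Mag le A elts ozero = {}"
  by (subst Mag_unfold) (simp add: M_step_def)

lemma Mag_osucc_ozero:
  assumes "ozero < (c::'o::wellorder)"
  shows "Mag le A elts (osucc (ozero::'o)) = objs A elts (LO_pre le A)"
proof -
  have "osucc ozero \<noteq> (ozero::'o)" using osucc_neq_ozero[OF assms] .
  then show ?thesis by (subst Mag_unfold) (simp add: M_step_def)
qed

lemma Mag_osucc:
  fixes b c :: "'o::wellorder"
  assumes "b < c" "b \<noteq> ozero"
  shows "Mag le A elts (osucc b) = objs A elts (LO_sub elts (Mag le A elts b))"
proof -
  have b_less: "b < osucc b" using osucc_greater[OF assms(1)] .
  have "ozero < b" using assms(2) ozero_least[of b] by simp
  then have n1: "osucc b \<noteq> osucc ozero"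
    using osucc_inject[OF b_less osucc_greater] assms(2) by blast
  have n0: "osucc b \<noteq> ozero" using osucc_neq_ozero[OF assms(1)] .
  have ex: "\<exists>b'<osucc b. osucc b = osucc b'" using b_less by blast
  show ?thesis
    by (subst Mag_unfold)
      (simp only: M_step_def if_not_P[OF n0] if_not_P[OF n1] if_P[OF ex] the_osucc_pred[OF b_less])
qed

lemma mem_Mag_osucc_ozero_iff:
  "ozero < (g::'o::wellorder) \<Longrightarrow>
    u \<in> Mag le A elts (osucc (ozero::'o)) \<longleftrightarrow> u \<notin> A \<and> elts u \<in> LO_pre le A"
  by (simp add: Mag_osucc_ozero objs_def)

lemma mem_Mag_osucc_iff:
  "(b::'o::wellorder) < g \<Longrightarrow> b \<noteq> ozero \<Longrightarrow>
    u \<in> Mag le A elts (osucc b) \<longleftrightarrow> u \<notin> A \<and> elts u \<in> LO_sub elts (Mag le A elts b)"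
  by (simp add: Mag_osucc objs_def)

lemma ex_realiser_in_Mag_osucc_iff:
  assumes "(b::'o::wellorder) < g" "b \<noteq> ozero" "u \<notin> A" "elts u = S"
  shows "(\<exists>y. y \<notin> A \<and> elts y = S \<and> y \<in> Mag le A elts (osucc b))
    \<longleftrightarrow> S \<in> LO_sub elts (Mag le A elts b)"
  using assms(3,4) mem_Mag_osucc_iff[OF assms(1,2), of _ le A elts] by metis

lemma Mag_nonsucc:
  fixes g :: "'o::wellorder"
  assumes n0: "g \<noteq> ozero" and ns: "\<not> (\<exists>b<g. g = osucc b)"
  shows "Mag le A elts g = (\<Union>b\<in>{b. osucc ozero \<le> b \<and> b < g}. Mag le A elts b)"
proof -
  have "ozero < g" using n0 ozero_least[of g] by simp
  then have n1: "g \<noteq> osucc ozero" using ns by blast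
  show ?thesis
    by (subst Mag_unfold) (simp only: M_step_def if_not_P[OF n0] if_not_P[OF n1] if_not_P[OF ns])
qed

lemma Mag_in_osucc_stage:
  "z \<in> Mag le A elts (g::'o::wellorder) \<Longrightarrow>
    \<exists>b<g. z \<in> Mag le A elts (osucc b) \<and> Mag le A elts (osucc b) \<subseteq> Mag le A elts g"
proof (induction g rule: less_induct)
  case (less g)
  consider "g = ozero" | "\<exists>b<g. g = osucc b" | "g \<noteq> ozero" "\<not> (\<exists>b<g. g = osucc b)" by blast
  then show ?case
  proof cases
    case 1
    then show ?thesis using less.prems by (simp add: Mag_ozero)
  next
    case 2
    then show ?thesis using less.prems by blast
  next
    case 3
    then have M_g: "Mag le A elts g = (\<Union>c\<in>{c. osucc ozero \<le> c \<and> c < g}. Mag le A elts c)"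
      by (rule Mag_nonsucc)
    then obtain c where c: "c < g" "z \<in> Mag le A elts c" and "osucc ozero \<le> c"
      using less.prems by blast
    then have "Mag le A elts c \<subseteq> Mag le A elts g"
      unfolding M_g by blast
    moreover obtain b where "b < c" "z \<in> Mag le A elts (osucc b)"
      "Mag le A elts (osucc b) \<subseteq> Mag le A elts c"
      using less.IH[OF c] by blast
    ultimately show ?thesis using c(1) by (blast intro: order.strict_trans)
  qed
qed

lemma Mag_memberD:
  assumes "z \<in> Mag le A elts (g::'o::wellorder)"
  shows "z \<notin> A" "elts z \<noteq> {}"
proof -
  obtain b where b: "b < g" "z \<in> Mag le A elts (osucc b)"
    using Mag_in_osucc_stage[OF assms] by blast
  have "ozero < g" using b(1) ozero_least[of b] by simp
  have "z \<notin> A \<and> (elts z \<in> LO_pre le A \<or> elts z \<in> LO_sub elts (Mag le A elts b))"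
    using b mem_Mag_osucc_ozero_iff[OF \<open>ozero < g\<close>, of z le A elts]
      mem_Mag_osucc_iff[OF b(1), of z le A elts]
    by (cases "b = ozero") simp_all
  then show "z \<notin> A" "elts z \<noteq> {}" by (auto simp: LO_pre_def LO_sub_def)
qed

lemma Mag_limit:
  assumes "is_limit (g::'o::wellorder)"
  shows "Mag le A elts g = (\<Union>b<g. Mag le A elts (osucc b))"
proof
  show "Mag le A elts g \<subseteq> (\<Union>b<g. Mag le A elts (osucc b))"
  proof
    fix z assume "z \<in> Mag le A elts g"
    then obtain b where "b < g" "z \<in> Mag le A elts (osucc b)"
      using Mag_in_osucc_stage[of z le A elts g] by blast
    then show "z \<in> (\<Union>b<g. Mag le A elts (osucc b))" by blast
  qed
next
  have closed: "\<forall>b<g. osucc b < g" and n0: "g \<noteq> ozero"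
    using assms unfolding is_limit_def by auto
  then have ns: "\<not> (\<exists>b<g. g = osucc b)" by force
  have "osucc ozero \<le> osucc b" if "b < g" for b
  proof (cases "b = ozero")
    case False
    then have "ozero < b" using ozero_least[of b] by (simp add: order.strict_iff_order)
    then have "ozero < osucc b" using osucc_greater[OF that] by (rule order.strict_trans)
    then show ?thesis by (rule osucc_least)
  qed simp
  with closed show "(\<Union>b<g. Mag le A elts (osucc b)) \<subseteq> Mag le A elts g"
    unfolding Mag_nonsucc[OF n0 ns] by blast
qed

lemma Mag_osucc_downward_closed:
  fixes b c g :: "'o::wellorder"
  assumes "b < g" "c < g" "u \<in> Mag le A elts (osucc b)" "v \<in> Mag le A elts (osucc c)"
    and "elts v \<subseteq> elts u"
  shows "v \<in> Mag le A elts (osucc b)"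
  using assms
proof (induction "max b c" arbitrary: b c u v rule: less_induct)
  case less
  have b: "b < g" and c: "c < g" and u: "u \<in> Mag le A elts (osucc b)"
    and v: "v \<in> Mag le A elts (osucc c)" and vu: "elts v \<subseteq> elts u"
    by fact+
  have "ozero < g" using b ozero_least[of b] by simp
  have v_set: "v \<notin> A" "elts v \<noteq> {}" using Mag_memberD[OF v] by auto
  have atoms_if_ozero: "elts w \<subseteq> A" if "w \<in> Mag le A elts (osucc (ozero::'o))" for w
    using that mem_Mag_osucc_ozero_iff[OF \<open>ozero < g\<close>, of w le A elts] by (simp add: LO_pre_def)
  have no_atoms_if_not_ozero: "elts w \<inter> A = {}"
    if "d < g" "d \<noteq> ozero" "w \<in> Mag le A elts (osucc d)" for d w
    using that mem_Mag_osucc_iff[of d g w le A elts] Mag_memberD(1)[of _ le A elts d]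
    by (auto simp: LO_sub_def)
  have same_level: "b = ozero \<longleftrightarrow> c = ozero"
  proof
    assume "b = ozero"
    then have "elts u \<subseteq> A" using atoms_if_ozero u by simp
    then show "c = ozero" using no_atoms_if_not_ozero[OF c _ v] vu v_set(2) by blast
  next
    assume "c = ozero"
    then have "elts v \<subseteq> A" using atoms_if_ozero v by simp
    then show "b = ozero" using no_atoms_if_not_ozero[OF b _ u] vu v_set(2) by blast
  qed
  then consider "b = ozero" "c = ozero" | "b \<noteq> ozero" "c \<noteq> ozero" by blast
  then show ?case
  proof cases
    case 1
    then show ?thesis using v by simp
  next
    case 2
    have u_LO: "elts u \<in> LO_sub elts (Mag le A elts b)"
      using u mem_Mag_osucc_iff[OF b 2(1), of u le A elts] by simp
    have v_LO: "elts v \<in> LO_sub elts (Mag le A elts c)"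
      using v mem_Mag_osucc_iff[OF c 2(2), of v le A elts] by simp
    have "elts v \<in> LO_sub elts (Mag le A elts b)"
      unfolding LO_sub_def
    proof (intro CollectI conjI ballI impI)
      show "elts v \<noteq> {}" by (rule v_set(2))
      show "elts v \<subseteq> Mag le A elts b" using vu u_LO by (auto simp: LO_sub_def)
      fix p q assume p: "p \<in> elts v" and q: "q \<in> Mag le A elts b" and qp: "elts q \<subseteq> elts p"
      obtain b' where b': "b' < b" "q \<in> Mag le A elts (osucc b')"
        using Mag_in_osucc_stage[OF q] by blast
      have "p \<in> Mag le A elts c" using p v_LO by (auto simp: LO_sub_def)
      then obtain c' where c': "c' < c" "p \<in> Mag le A elts (osucc c')"
        "Mag le A elts (osucc c') \<subseteq> Mag le A elts c"
        using Mag_in_osucc_stage[of p le A elts c] by blast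
      have "max c' b' < max b c" using b'(1) c'(1) by (auto simp: max_def)
      moreover have "c' < g" "b' < g" using b'(1) c'(1) b c by auto
      ultimately have "q \<in> Mag le A elts (osucc c')"
        using less.hyps c'(2) b'(2) qp by blast
      then show "q \<in> elts v" using c'(3) p qp v_LO by (auto simp: LO_sub_def)
    qed
    then show ?thesis using mem_Mag_osucc_iff[OF b 2(1), of v le A elts] v_set(1) by simp
  qed
qed

lemma LO_sub_Mag_limit_iff:
  fixes \<alpha> :: "'o::wellorder"
  assumes lim: "is_limit \<alpha>" and X_sub: "X \<subseteq> Mag le A elts \<alpha>"
  shows "X \<in> LO_sub elts (Mag le A elts \<alpha>) \<longleftrightarrow>
    X \<noteq> {} \<and> (\<forall>b<\<alpha>. X \<inter> Mag le A elts (osucc b) \<noteq> {} \<longrightarrow>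
      X \<inter> Mag le A elts (osucc b) \<in> LO_sub elts (Mag le A elts (osucc b)))"
proof (intro iffI conjI allI impI)
  assume X_LO: "X \<in> LO_sub elts (Mag le A elts \<alpha>)"
  then show "X \<noteq> {}" by (simp add: LO_sub_def)
  fix b assume "b < \<alpha>" and "X \<inter> Mag le A elts (osucc b) \<noteq> {}"
  moreover have "Mag le A elts (osucc b) \<subseteq> Mag le A elts \<alpha>"
    using \<open>b < \<alpha>\<close> Mag_limit[OF lim, of le A elts] by blast
  ultimately show "X \<inter> Mag le A elts (osucc b) \<in> LO_sub elts (Mag le A elts (osucc b))"
    using X_LO by (auto simp: LO_sub_def)
next
  assume pieces: "X \<noteq> {} \<and> (\<forall>b<\<alpha>. X \<inter> Mag le A elts (osucc b) \<noteq> {} \<longrightarrow>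
      X \<inter> Mag le A elts (osucc b) \<in> LO_sub elts (Mag le A elts (osucc b)))"
  show "X \<in> LO_sub elts (Mag le A elts \<alpha>)"
    unfolding LO_sub_def
  proof (intro CollectI conjI ballI impI)
    show "X \<noteq> {}" using pieces by simp
    show "X \<subseteq> Mag le A elts \<alpha>" by (rule X_sub)
    fix y z assume y: "y \<in> X" and z: "z \<in> Mag le A elts \<alpha>" and zy: "elts z \<subseteq> elts y"
    obtain b where b: "b < \<alpha>" "y \<in> Mag le A elts (osucc b)"
      using y X_sub Mag_limit[OF lim, of le A elts] by blast
    obtain c where c: "c < \<alpha>" "z \<in> Mag le A elts (osucc c)"
      using z Mag_limit[OF lim, of le A elts] by blast
    have "z \<in> Mag le A elts (osucc b)"
      using Mag_osucc_downward_closed[OF b(1) c(1) b(2) c(2) zy] .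
    then show "z \<in> X"
      using pieces b y zy by (auto simp: LO_sub_def)
  qed
qed

theorem proposition4p9:
  fixes A :: "'v set" and elts :: "'v \<Rightarrow> 'v set" and le :: "'v \<Rightarrow> 'v \<Rightarrow> bool"
    and \<alpha> :: "'o::wellorder" and x :: 'v
  assumes atoms_empty: "\<forall>a\<in>A. elts a = {}"
    and extensional: "\<forall>u w. u \<notin> A \<longrightarrow> w \<notin> A \<longrightarrow> elts u = elts w \<longrightarrow> u = w"
    and sep_A: "\<forall>S. S \<subseteq> A \<longrightarrow> (\<exists>u. u \<notin> A \<and> elts u = S)"
    and sep_M: "\<forall>g\<le>\<alpha>. \<forall>S. S \<subseteq> Mag le A elts g \<longrightarrow> (\<exists>u. u \<notin> A \<and> elts u = S)"
    and A_inf: "infinite A"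
    and le_refl: "\<forall>a\<in>A. le a a"
    and le_trans: "\<forall>a\<in>A. \<forall>b\<in>A. \<forall>c\<in>A. le a b \<longrightarrow> le b c \<longrightarrow> le a c"
    and no_min: "\<forall>a\<in>A. \<exists>b\<in>A. le b a \<and> \<not> le a b"
    and lim: "is_limit \<alpha>"
    and succ_exists: "\<exists>g. \<alpha> < g"
    and x_set: "x \<notin> A"
    and x_ne: "elts x \<noteq> {}"
    and x_sub: "elts x \<subseteq> Mag le A elts \<alpha>"
  shows "x \<in> Mag le A elts (osucc \<alpha>) \<longleftrightarrow>
     (let I = {b. b < \<alpha> \<and> elts x \<inter> Mag le A elts (osucc b) \<noteq> {}}
      in I \<noteq> {}
       \<and> elts x = (\<Union>b\<in>I. elts x \<inter> Mag le A elts (osucc b))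
       \<and> (\<forall>b\<in>I. \<exists>y. y \<notin> A \<and> elts y = elts x \<inter> Mag le A elts (osucc b)
                     \<and> y \<in> Mag le A elts (osucc (osucc b))))"
proof -
  let ?M = "Mag le A elts"
  let ?piece = "\<lambda>b. elts x \<inter> ?M (osucc b)"
  let ?I = "{b. b < \<alpha> \<and> ?piece b \<noteq> {}}"
  have closed: "\<forall>b<\<alpha>. osucc b < \<alpha>" and "\<alpha> \<noteq> ozero"
    using lim unfolding is_limit_def by auto
  obtain g where "\<alpha> < g" using succ_exists by blast
  have x_stages: "elts x \<subseteq> (\<Union>b<\<alpha>. ?M (osucc b))"
    using x_sub unfolding Mag_limit[OF lim] .
  then have cover: "elts x = (\<Union>b\<in>?I. ?piece b)" by blast
  have "?I \<noteq> {}" using x_stages x_ne by blast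
  have piece_iff: "(\<exists>y. y \<notin> A \<and> elts y = ?piece b \<and> y \<in> ?M (osucc (osucc b)))
      \<longleftrightarrow> ?piece b \<in> LO_sub elts (?M (osucc b))" if "b < \<alpha>" for b
  proof -
    have "osucc b < \<alpha>" using closed that by blast
    moreover obtain y where "y \<notin> A" "elts y = ?piece b"
      using sep_M \<open>osucc b < \<alpha>\<close> by (meson inf_le2 less_imp_le)
    ultimately show ?thesis
      by (rule ex_realiser_in_Mag_osucc_iff[OF _ osucc_neq_ozero[OF that]])
  qed
  have "x \<in> ?M (osucc \<alpha>) \<longleftrightarrow> elts x \<in> LO_sub elts (?M \<alpha>)"
    using mem_Mag_osucc_iff[OF \<open>\<alpha> < g\<close> \<open>\<alpha> \<noteq> ozero\<close>, of x le A elts] x_set by simp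
  also have "\<dots> \<longleftrightarrow> (\<forall>b<\<alpha>. ?piece b \<noteq> {} \<longrightarrow> ?piece b \<in> LO_sub elts (?M (osucc b)))"
    using LO_sub_Mag_limit_iff[OF lim x_sub] x_ne by simp
  also have "\<dots> \<longleftrightarrow> (\<forall>b\<in>?I. \<exists>y. y \<notin> A \<and> elts y = ?piece b \<and> y \<in> ?M (osucc (osucc b)))"
    using piece_iff by auto
  also have "\<dots> \<longleftrightarrow> (let I = ?I in I \<noteq> {} \<and> elts x = (\<Union>b\<in>I. ?piece b)
      \<and> (\<forall>b\<in>I. \<exists>y. y \<notin> A \<and> elts y = ?piece b \<and> y \<in> ?M (osucc (osucc b))))"
    unfolding Let_def by (simp only: cover[symmetric] \<open>?I \<noteq> {}\<close> simp_thms)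
  finally show ?thesis .
qed

end
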